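(* Let $G=(V,E)$ be a finite graph and $\varepsilon$ an orientation of $G$. The number of orientations of $G$ that are Eulerian equivalent to $\varepsilon$ equals the number of flows of $(G,\varepsilon)$ with values in $\{0,1\}$: \[\#[\varepsilon]=\bar\varphi_\varepsilon(G,1)=|\bar\Delta^+_{\mathrm{FL}}(G,\varepsilon)\cap\mathbb Z^E|.\]
   Context: An orientation assigns each edge (including loops) one of its two directions; $\varepsilon(v,e)=1$ ($-1$) if non-loop $e$ points out of (into) end-vertex $v$, $0$ otherwise. A flow of $(G,\varepsilon)$ with values in a set of reals is $f:E\to\mathbb R$ with $\sum_e m_{v,e}f(e)=0$ for all $v$, $m_{v,e}=\varepsilon(v,e)$ for non-loops and $0$ for loops. $\bar\Delta^+_{\mathrm{FL}}(G,\varepsilon)=\{f \text{ real flow}:0\le f(e)\le1\ \forall e\}$; $\bar\varphi_\varepsilon(G,q)$ is the number of integer flows with $0\le f(e)\le q$ for all $e$. $[\varepsilon]$ is the set of orientations Eulerian equivalent to $\varepsilon$, where two orientations are Eulerian equivalent if the spanning subgraph formed by the edges on which they differ is directed Eulerian (in-degree equals out-degree at each vertex, loops contributing one of each) with respect to either of them. *)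

theory Defs
  imports Complex_Main
begin

text \<open>A finite graph (loops and multiple edges allowed) is given by a vertex set V,
an edge set E and a map ends assigning to each edge its two (reference-ordered)
end vertices. An orientation is a Boolean function on E: ori e = True means that e
is directed from fst (ends e) to snd (ends e), False means the opposite direction.
Loops therefore also have two directions.\<close>

definition orientations :: "'e set \<Rightarrow> ('e \<Rightarrow> bool) set" where
  "orientations E = {ori. \<forall>e. e \<notin> E \<longrightarrow> ori e = False}"

definition tail :: "('e \<Rightarrow> 'v \<times> 'v) \<Rightarrow> ('e \<Rightarrow> bool) \<Rightarrow> 'e \<Rightarrow> 'v" where
  "tail ends ori e = (if ori e then fst (ends e) else snd (ends e))"

definition head :: "('e \<Rightarrow> 'v \<times> 'v) \<Rightarrow> ('e \<Rightarrow> bool) \<Rightarrow> 'e \<Rightarrow> 'v" where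
  "head ends ori e = (if ori e then snd (ends e) else fst (ends e))"

definition is_loop :: "('e \<Rightarrow> 'v \<times> 'v) \<Rightarrow> 'e \<Rightarrow> bool" where
  "is_loop ends e = (fst (ends e) = snd (ends e))"

definition inc_coeff :: "('e \<Rightarrow> 'v \<times> 'v) \<Rightarrow> ('e \<Rightarrow> bool) \<Rightarrow> 'v \<Rightarrow> 'e \<Rightarrow> int" where
  "inc_coeff ends ori v e =
     (if is_loop ends e then 0
      else if v = tail ends ori e then 1
      else if v = head ends ori e then -1 else 0)"

text \<open>Directed Eulerian spanning subgraph with edge set D w.r.t. orientation ori
(a loop contributes one to in-degree and one to out-degree of its vertex).\<close>
definition directed_eulerian ::
  "'v set \<Rightarrow> ('e \<Rightarrow> 'v \<times> 'v) \<Rightarrow> ('e \<Rightarrow> bool) \<Rightarrow> 'e set \<Rightarrow> bool" where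
  "directed_eulerian V ends ori D =
     (\<forall>v\<in>V. card {e\<in>D. tail ends ori e = v} = card {e\<in>D. head ends ori e = v})"

definition eulerian_equiv ::
  "'v set \<Rightarrow> 'e set \<Rightarrow> ('e \<Rightarrow> 'v \<times> 'v) \<Rightarrow> ('e \<Rightarrow> bool) \<Rightarrow> ('e \<Rightarrow> bool) \<Rightarrow> bool" where
  "eulerian_equiv V E ends o1 o2 =
     directed_eulerian V ends o1 {e\<in>E. o1 e \<noteq> o2 e}"

definition eul_class ::
  "'v set \<Rightarrow> 'e set \<Rightarrow> ('e \<Rightarrow> 'v \<times> 'v) \<Rightarrow> ('e \<Rightarrow> bool) \<Rightarrow> ('e \<Rightarrow> bool) set" where
  "eul_class V E ends eps = {ori \<in> orientations E. eulerian_equiv V E ends eps ori}"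

definition is_flow ::
  "'v set \<Rightarrow> 'e set \<Rightarrow> ('e \<Rightarrow> 'v \<times> 'v) \<Rightarrow> ('e \<Rightarrow> bool) \<Rightarrow> ('e \<Rightarrow> 'a::comm_ring_1) \<Rightarrow> bool" where
  "is_flow V E ends eps f =
     ((\<forall>e. e \<notin> E \<longrightarrow> f e = 0) \<and>
      (\<forall>v\<in>V. (\<Sum>e\<in>E. of_int (inc_coeff ends eps v e) * f e) = 0))"

definition flow_polytope ::
  "'v set \<Rightarrow> 'e set \<Rightarrow> ('e \<Rightarrow> 'v \<times> 'v) \<Rightarrow> ('e \<Rightarrow> bool) \<Rightarrow> ('e \<Rightarrow> real) set" where
  "flow_polytope V E ends eps =
     {f. is_flow V E ends eps f \<and> (\<forall>e\<in>E. 0 \<le> f e \<and> f e \<le> 1)}"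

definition phi_bar ::
  "'v set \<Rightarrow> 'e set \<Rightarrow> ('e \<Rightarrow> 'v \<times> 'v) \<Rightarrow> ('e \<Rightarrow> bool) \<Rightarrow> nat \<Rightarrow> nat" where
  "phi_bar V E ends eps q =
     card {f :: 'e \<Rightarrow> int. is_flow V E ends eps f \<and> (\<forall>e\<in>E. 0 \<le> f e \<and> f e \<le> int q)}"

end

theory Submission
  imports Defs
begin

text \<open>An orientation is determined by the set D of edges on which it differs from eps, and it
lies in [eps] exactly when D is directed Eulerian for eps. The net flow of the 0/1 indicator of D
at a vertex v is the out-degree minus the in-degree of v in D (loops contribute nothing), so D is
directed Eulerian exactly when its indicator is a flow. Hence the indicator of the reversed edges
is a bijection from [eps] onto the 0/1 flows, which are the integral points of the flow polytope.\<close>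

lemma inc_coeff_eq:
  "inc_coeff ends ori v e = of_bool (tail ends ori e = v) - of_bool (head ends ori e = v)"
  unfolding inc_coeff_def is_loop_def tail_def head_def
  by (cases "ends e") auto

lemma sum_inc_coeff_indicator:
  assumes "finite E" "D \<subseteq> E"
  shows "(\<Sum>e\<in>E. of_int (inc_coeff ends ori v e) * of_bool (e \<in> D) :: 'a::comm_ring_1)
       = of_nat (card {e\<in>D. tail ends ori e = v}) - of_nat (card {e\<in>D. head ends ori e = v})"
proof -
  have "finite D" using assms finite_subset by blast
  have "(\<Sum>e\<in>E. of_int (inc_coeff ends ori v e) * of_bool (e \<in> D) :: 'a)
      = (\<Sum>e\<in>D. of_int (inc_coeff ends ori v e))"
    using assms by (simp add: Int_absorb1 Collect_mem_eq)
  also have "\<dots> = (\<Sum>e\<in>D. of_bool (tail ends ori e = v) - of_bool (head ends ori e = v))"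
    by (simp add: inc_coeff_eq)
  also have "\<dots> = of_nat (card {e\<in>D. tail ends ori e = v}) - of_nat (card {e\<in>D. head ends ori e = v})"
    using \<open>finite D\<close> by (simp add: sum_subtractf of_bool_def sum.If_cases Int_def conj_commute)
  finally show ?thesis .
qed

lemma is_flow_indicator_iff_directed_eulerian:
  assumes "finite E" "D \<subseteq> E"
  shows "is_flow V E ends ori (\<lambda>e. of_bool (e \<in> D) :: 'a::{comm_ring_1, ring_char_0})
     \<longleftrightarrow> directed_eulerian V ends ori D"
  using assms
  by (auto simp: is_flow_def directed_eulerian_def sum_inc_coeff_indicator[OF assms])

lemma is_flow_of_int_iff:
  "is_flow V E ends ori (\<lambda>e. of_int (f e) :: 'a::{comm_ring_1, ring_char_0})
     \<longleftrightarrow> is_flow V E ends ori f"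
proof -
  have "(\<Sum>e\<in>E. of_int (inc_coeff ends ori v e) * of_int (f e) :: 'a)
      = of_int (\<Sum>e\<in>E. inc_coeff ends ori v e * f e)" for v
    by simp
  then show ?thesis
    unfolding is_flow_def by (simp del: of_int_sum of_int_mult)
qed

definition zero_one_flows ::
  "'v set \<Rightarrow> 'e set \<Rightarrow> ('e \<Rightarrow> 'v \<times> 'v) \<Rightarrow> ('e \<Rightarrow> bool) \<Rightarrow> ('e \<Rightarrow> int) set" where
  "zero_one_flows V E ends eps = {f. is_flow V E ends eps f \<and> (\<forall>e\<in>E. 0 \<le> f e \<and> f e \<le> 1)}"

lemma phi_bar_one: "phi_bar V E ends eps 1 = card (zero_one_flows V E ends eps)"
  by (simp add: phi_bar_def zero_one_flows_def)

definition reversal_indicator :: "'e set \<Rightarrow> ('e \<Rightarrow> bool) \<Rightarrow> ('e \<Rightarrow> bool) \<Rightarrow> 'e \<Rightarrow> int" where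
  "reversal_indicator E eps ori = (\<lambda>e. of_bool (e \<in> {e\<in>E. eps e \<noteq> ori e}))"

lemma bij_betw_eul_class_zero_one_flows:
  assumes "finite E"
  shows "bij_betw (reversal_indicator E eps) (eul_class V E ends eps) (zero_one_flows V E ends eps)"
proof (rule bij_betw_imageI)
  show "inj_on (reversal_indicator E eps) (eul_class V E ends eps)"
  proof (rule inj_onI, rule ext)
    fix o1 o2 e
    assume "o1 \<in> eul_class V E ends eps" "o2 \<in> eul_class V E ends eps"
      and same: "reversal_indicator E eps o1 = reversal_indicator E eps o2"
    have "e \<in> E \<longrightarrow> (eps e \<noteq> o1 e \<longleftrightarrow> eps e \<noteq> o2 e)"
      using fun_cong[OF same, of e] by (auto simp: reversal_indicator_def of_bool_eq_iff)
    then show "o1 e = o2 e"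
      using \<open>o1 \<in> _\<close> \<open>o2 \<in> _\<close> by (auto simp: eul_class_def orientations_def)
  qed
next
  have flow_iff: "is_flow V E ends eps (reversal_indicator E eps ori)
      \<longleftrightarrow> eulerian_equiv V E ends eps ori" for ori
    unfolding reversal_indicator_def eulerian_equiv_def
    by (rule is_flow_indicator_iff_directed_eulerian[OF assms]) auto
  show "reversal_indicator E eps ` eul_class V E ends eps = zero_one_flows V E ends eps"
  proof
    have "0 \<le> reversal_indicator E eps ori e \<and> reversal_indicator E eps ori e \<le> 1" for ori e
      by (simp add: reversal_indicator_def)
    then show "reversal_indicator E eps ` eul_class V E ends eps \<subseteq> zero_one_flows V E ends eps"
      by (auto simp: eul_class_def zero_one_flows_def flow_iff)
  next
    show "zero_one_flows V E ends eps \<subseteq> reversal_indicator E eps ` eul_class V E ends eps"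
    proof
      fix f assume "f \<in> zero_one_flows V E ends eps"
      then have f: "is_flow V E ends eps f" "\<forall>e\<in>E. 0 \<le> f e \<and> f e \<le> 1"
        by (simp_all add: zero_one_flows_def)
      define ori where "ori = (\<lambda>e. e \<in> E \<and> eps e \<noteq> (f e = 1))"
      have "f e = reversal_indicator E eps ori e" for e
        using f by (cases "e \<in> E") (auto simp: ori_def reversal_indicator_def is_flow_def)
      then have "reversal_indicator E eps ori = f" by auto
      moreover have "ori \<in> eul_class V E ends eps"
        using f \<open>reversal_indicator E eps ori = f\<close> flow_iff[of ori]
        by (auto simp: eul_class_def orientations_def ori_def)
      ultimately show "f \<in> reversal_indicator E eps ` eul_class V E ends eps" by blast
    qed
  qed
qed

lemma bij_betw_zero_one_flows_integral_points:
  "bij_betw (\<lambda>f e. real_of_int (f e)) (zero_one_flows V E ends eps)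
     (flow_polytope V E ends eps \<inter> {f. \<forall>e\<in>E. f e \<in> \<int>})"
proof (rule bij_betw_imageI)
  show "inj_on (\<lambda>f e. real_of_int (f e)) (zero_one_flows V E ends eps)"
    by (rule inj_onI) (auto simp: fun_eq_iff)
next
  show "(\<lambda>f e. real_of_int (f e)) ` zero_one_flows V E ends eps
      = flow_polytope V E ends eps \<inter> {f. \<forall>e\<in>E. f e \<in> \<int>}"
  proof (intro equalityI subsetI)
    fix r assume "r \<in> flow_polytope V E ends eps \<inter> {f. \<forall>e\<in>E. f e \<in> \<int>}"
    then have r: "is_flow V E ends eps r" "\<forall>e\<in>E. 0 \<le> r e \<and> r e \<le> 1 \<and> r e \<in> \<int>"
      by (auto simp: flow_polytope_def)
    have "r e = real_of_int \<lfloor>r e\<rfloor>" for e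
      using r by (cases "e \<in> E") (auto simp: is_flow_def elim!: Ints_cases)
    then have "r = (\<lambda>e. real_of_int \<lfloor>r e\<rfloor>)" by auto
    with r show "r \<in> (\<lambda>f e. real_of_int (f e)) ` zero_one_flows V E ends eps"
      by (intro image_eqI[of _ _ "\<lambda>e. \<lfloor>r e\<rfloor>"])
        (auto simp: zero_one_flows_def is_flow_of_int_iff[symmetric, where 'a=real])
  qed (auto simp: zero_one_flows_def flow_polytope_def is_flow_of_int_iff)
qed

theorem proposition5p5:
  fixes V :: "'v set" and E :: "'e set" and ends :: "'e \<Rightarrow> 'v \<times> 'v"
    and eps :: "'e \<Rightarrow> bool"
  assumes "finite V" and "finite E"
    and "\<forall>e\<in>E. fst (ends e) \<in> V \<and> snd (ends e) \<in> V"
    and "eps \<in> orientations E"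
  shows "card (eul_class V E ends eps) = phi_bar V E ends eps 1
       \<and> phi_bar V E ends eps 1
           = card (flow_polytope V E ends eps \<inter> {f. \<forall>e\<in>E. f e \<in> \<int>})"
  unfolding phi_bar_one
  using bij_betw_same_card[OF bij_betw_eul_class_zero_one_flows[OF \<open>finite E\<close>, of eps V ends]]
    bij_betw_same_card[OF bij_betw_zero_one_flows_integral_points[of V E ends eps]]
  by simp

end
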